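(* Let $k\ge1$ and let real numbers $\eta_1,\dots,\eta_k$ satisfy $\eta_1+\cdots+\eta_k=1$ and $\eta_k\ge\eta_{k-1}\ge\cdots\ge\eta_1>0$. Then there exist sequences of positive integers $(a_{n,j})_{n\ge1}$, $1\le j\le k$, with $a_{1,1}<a_{1,2}<\cdots<a_{1,k}<a_{2,1}<\cdots<a_{2,k}<a_{3,1}<\cdots$, $$\lim_{n\to\infty}\frac{a_{n+1,1}-a_{n,k}}{a_{n+1,k}}=\eta_1,\qquad\lim_{n\to\infty}\frac{a_{n,i}-a_{n,i-1}}{a_{n,k}}=\eta_i\ (2\le i\le k),\qquad\lim_{n\to\infty}\frac{a_{n+1,1}}{a_{n,k}}=\infty,$$ such that, with $\zeta_j=\sum_{n\ge1}2^{-a_{n,j}}$, the set $\{1,\zeta_1,\dots,\zeta_k\}$ is linearly independent over $\mathbb{Q}$. *)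

theory Defs
  imports "HOL-Analysis.Analysis"
begin

end

theory Submission
  imports Defs
begin

text \<open>
  Interleave all exponents a(n,j) into one strictly increasing sequence f; its gaps
  f(m+1) - f(m) tend to infinity. After clearing denominators, a rational relation
  q_0 + q_1 zeta_1 + ... + q_k zeta_k = 0 says that a binary series sum_m d_m 2^(-f(m)) with
  bounded integer digits d_m, periodic of period k, is an integer. Multiplying by 2^f(N) turns
  its tail after N into an integer of absolute value at most 2 max|d| 2^(f(N) - f(N+1)), so the
  tails eventually vanish; hence so do the digits, that is, all q_j.

  The exponents are a(n,j) = floor((eta_1 + ... + eta_j) M_n) for a scale M_n with
  M_(n+1) / M_n tending to infinity, which makes the three limits immediate.
\<close>

lemma strict_mono_add_le:
  fixes f :: "nat \<Rightarrow> nat"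
  assumes "strict_mono f"
  shows "f N + m \<le> f (m + N)"
proof (induction m)
  case (Suc m)
  have "f (m + N) < f (Suc m + N)" using assms by (simp add: strict_mono_less)
  with Suc show ?case by simp
qed simp

lemma summable_binary_series:
  fixes f :: "nat \<Rightarrow> nat" and d :: "nat \<Rightarrow> real"
  assumes "strict_mono f" and "\<And>m. \<bar>d m\<bar> \<le> B"
  shows "summable (\<lambda>m. d m * (1/2) ^ f m)"
proof (rule summable_comparison_test'[where g = "\<lambda>m. B * (1/2) ^ m" and N = 0])
  show "summable (\<lambda>m. B * (1/2::real) ^ m)" by (simp add: summable_geometric)
  fix m
  have "(1/2::real) ^ f m \<le> (1/2) ^ m" using seq_suble[OF assms(1)] by (simp add: power_decreasing)
  then show "norm (d m * (1/2) ^ f m) \<le> B * (1/2) ^ m"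
    using assms(2)[of m] by (simp add: abs_mult mult_mono)
qed

lemma binary_series_tail_bound:
  fixes f :: "nat \<Rightarrow> nat" and d :: "nat \<Rightarrow> real"
  assumes f: "strict_mono f" and d: "\<And>m. \<bar>d m\<bar> \<le> B"
  shows "\<bar>\<Sum>m. d (m + N) * (1/2) ^ f (m + N)\<bar> \<le> 2 * B * (1/2) ^ f N"
proof -
  have B: "0 \<le> B" using d[of 0] by linarith
  have geo: "summable (\<lambda>m. B * (1/2) ^ f N * (1/2::real) ^ m)"
    by (simp add: summable_geometric)
  have term_le: "\<bar>d (m + N) * (1/2) ^ f (m + N)\<bar> \<le> B * (1/2) ^ f N * (1/2) ^ m" for m
  proof -
    have "(1/2::real) ^ f (m + N) \<le> (1/2) ^ (f N + m)"
      using strict_mono_add_le[OF f] by (simp add: power_decreasing)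
    then show ?thesis using d[of "m + N"] B by (simp add: abs_mult power_add mult.assoc mult_mono)
  qed
  have "\<bar>\<Sum>m. d (m + N) * (1/2) ^ f (m + N)\<bar> \<le> (\<Sum>m. B * (1/2) ^ f N * (1/2) ^ m)"
    using norm_suminf_le[OF _ geo, of "\<lambda>m. d (m + N) * (1/2) ^ f (m + N)"] term_le by simp
  also have "\<dots> = 2 * B * (1/2) ^ f N"
    using suminf_mult[OF summable_geometric, of "1/2::real" "B * (1/2) ^ f N"]
    by (simp add: suminf_geometric)
  finally show ?thesis .
qed

lemma binary_series_integral_tail:
  fixes f :: "nat \<Rightarrow> nat" and d :: "nat \<Rightarrow> real"
  assumes f: "strict_mono f" and "\<And>m. \<bar>d m\<bar> \<le> B" and d_Ints: "\<And>m. d m \<in> \<int>"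
    and sum_Ints: "(\<Sum>m. d m * (1/2) ^ f m) \<in> \<int>"
  shows "2 ^ f N * (\<Sum>m. d (m + Suc N) * (1/2) ^ f (m + Suc N)) \<in> \<int>"
proof -
  let ?x = "\<lambda>m. d m * (1/2::real) ^ f m"
  have split: "(\<Sum>m. ?x m) = (\<Sum>m. ?x (m + Suc N)) + (\<Sum>m<Suc N. ?x m)"
    using suminf_split_initial_segment[OF summable_binary_series[OF assms(1,2)]] .
  have head: "2 ^ f N * ?x m = d m * 2 ^ (f N - f m)" if "m < Suc N" for m
  proof -
    have "f m \<le> f N" using that f by (simp add: strict_mono_less_eq)
    then have "(2::real) ^ f N = 2 ^ (f N - f m) * 2 ^ f m" by (simp flip: power_add)
    then show ?thesis by (simp add: power_one_over field_simps)
  qed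
  have "(\<Sum>m<Suc N. 2 ^ f N * ?x m) = (\<Sum>m<Suc N. d m * 2 ^ (f N - f m))"
    using head by (intro sum.cong) simp_all
  then have "2 ^ f N * (\<Sum>m. ?x (m + Suc N)) = 2 ^ f N * (\<Sum>m. ?x m) - (\<Sum>m<Suc N. d m * 2 ^ (f N - f m))"
    unfolding split by (simp add: algebra_simps sum_distrib_left del: sum.lessThan_Suc)
  also have "\<dots> \<in> \<int>"
    using sum_Ints d_Ints by (intro Ints_diff Ints_mult Ints_sum Ints_power) auto
  finally show ?thesis .
qed

theorem lacunary_binary_series_Ints_imp_eventually_zero:
  fixes f :: "nat \<Rightarrow> nat" and d :: "nat \<Rightarrow> real"
  assumes f: "strict_mono f" and gaps: "filterlim (\<lambda>m. f (Suc m) - f m) at_top sequentially"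
    and d_bound: "\<And>m. \<bar>d m\<bar> \<le> B" and d_Ints: "\<And>m. d m \<in> \<int>"
    and sum_Ints: "(\<Sum>m. d m * (1/2) ^ f m) \<in> \<int>"
  shows "eventually (\<lambda>m. d m = 0) sequentially"
proof -
  define t where "t N = (\<Sum>m. d (m + N) * (1/2::real) ^ f (m + N))" for N
  obtain N0 where N0: "2 * B < 2 ^ N0" using real_arch_pow[of 2 "2 * B"] by auto
  have tail_zero: "t (Suc N) = 0" if "N0 \<le> f (Suc N) - f N" for N
  proof -
    have "\<bar>2 ^ f N * t (Suc N)\<bar> \<le> 2 ^ f N * (2 * B * (1/2) ^ f (Suc N))"
      using binary_series_tail_bound[OF f, of d B "Suc N"] d_bound unfolding t_def
      by (simp add: abs_mult)
    also have "\<dots> = 2 * B / 2 ^ (f (Suc N) - f N)"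
    proof -
      have "f N < f (Suc N)" using f by (simp add: strict_mono_Suc_iff)
      then have "(2::real) ^ f (Suc N) = 2 ^ (f (Suc N) - f N) * 2 ^ f N" by (simp flip: power_add)
      then show ?thesis by (simp add: power_one_over)
    qed
    also have "\<dots> < 1"
    proof -
      have "(2::real) ^ N0 \<le> 2 ^ (f (Suc N) - f N)" using that by (intro power_increasing) auto
      then have "2 * B < 2 ^ (f (Suc N) - f N)" using N0 by linarith
      then show ?thesis by simp
    qed
    finally show ?thesis
      using Ints_nonzero_abs_less1 binary_series_integral_tail[OF f d_bound d_Ints sum_Ints, of N]
      unfolding t_def by fastforce
  qed
  have "eventually (\<lambda>N. N0 \<le> f (Suc N) - f N) sequentially"
    using gaps by (simp add: filterlim_at_top)
  then have tail_Suc: "eventually (\<lambda>N. t (Suc N) = 0) sequentially"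
    by eventually_elim (rule tail_zero)
  then have "eventually (\<lambda>N. t N = 0) sequentially"
    using eventually_sequentially_Suc[of "\<lambda>N. t N = 0"] by blast
  with tail_Suc have "eventually (\<lambda>N. t N = 0 \<and> t (Suc N) = 0) sequentially"
    by (simp add: eventually_conj_iff)
  then have "eventually (\<lambda>N. d N * (1/2) ^ f N = 0) sequentially"
  proof eventually_elim
    case (elim N)
    have "t (Suc N) = t N - d N * (1/2) ^ f N"
      using suminf_split_head[OF summable_ignore_initial_segment[OF summable_binary_series[OF f d_bound], where k = N]]
      unfolding t_def by (simp add: add.commute)
    with elim show ?case by linarith
  qed
  then show ?thesis by simp
qed

lemma Rats_common_denominator:
  fixes q :: "'b \<Rightarrow> 'a :: field_char_0"
  assumes "finite A" and "\<forall>j\<in>A. q j \<in> \<rat>"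
  obtains D :: nat where "D > 0" and "\<forall>j\<in>A. of_nat D * q j \<in> \<int>"
proof -
  from assms have "\<exists>D::nat. D > 0 \<and> (\<forall>j\<in>A. of_nat D * q j \<in> \<int>)"
  proof (induction A rule: finite_induct)
    case empty
    show ?case by (intro exI[of _ 1]) simp
  next
    case (insert x A)
    then obtain D :: nat where D: "D > 0" "\<forall>j\<in>A. of_nat D * q j \<in> \<int>" by auto
    obtain p b :: int where b: "b > 0" and qx: "q x = of_int p / of_int b"
      using Rats_cases'[of "q x"] insert.prems by (metis insert_iff)
    have b_nat: "(of_nat (nat b) :: 'a) = of_int b" using b by simp
    have "of_nat (D * nat b) * q j \<in> \<int>" if "j \<in> insert x A" for j
    proof (cases "j = x")
      case True
      then have "of_nat (D * nat b) * q j = of_int (int D * p)" using b qx by (simp add: b_nat)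
      then show ?thesis by (metis Ints_of_int)
    next
      case False
      then have "of_nat (D * nat b) * q j = of_int b * (of_nat D * q j)" by (simp add: b_nat)
      then show ?thesis using D(2) False that by (metis Ints_mult Ints_of_int insertE)
    qed
    then show ?case using D(1) b by (intro exI[of _ "D * nat b"]) auto
  qed
  then show thesis using that by blast
qed

lemma suminf_div_mod_eq_sum_suminf:
  fixes x :: "nat \<Rightarrow> nat \<Rightarrow> 'a :: {t2_space, topological_comm_monoid_add}"
  assumes k: "k > 0" and "summable (\<lambda>m. x (m div k) (m mod k))"
    and rows: "\<And>j. j < k \<Longrightarrow> summable (\<lambda>n. x n j)"
  shows "(\<Sum>m. x (m div k) (m mod k)) = (\<Sum>j<k. \<Sum>n. x n j)"
proof -
  have block: "(\<Sum>m\<in>{n * k..<n * k + k}. x (m div k) (m mod k)) = (\<Sum>j<k. x n j)" for n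
    using sum.shift_bounds_nat_ivl[of "\<lambda>m. x (m div k) (m mod k)" 0 "n * k" k] k
    by (simp add: atLeast0LessThan add.commute)
  have "(\<lambda>n. \<Sum>j<k. x n j) sums (\<Sum>m. x (m div k) (m mod k))"
    using sums_group[OF summable_sums[OF assms(2)] k] by (simp only: block)
  then show ?thesis using suminf_sum[of "{..<k}" "\<lambda>j n. x n j"] rows by (simp add: sums_iff)
qed

locale lacunary_blocks =
  fixes k :: nat and e :: "nat \<Rightarrow> nat \<Rightarrow> nat"
  assumes k_ge_1: "k \<ge> 1"
    and gap_within: "\<And>n j. 1 \<le> j \<Longrightarrow> j < k \<Longrightarrow> e n j + n < e n (Suc j)"
    and gap_between: "\<And>n. e n k + n < e (Suc n) 1"
begin

definition flat :: "nat \<Rightarrow> nat"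
  where "flat m = e (m div k) (Suc (m mod k))"

lemma flat_block: "j < k \<Longrightarrow> flat (n * k + j) = e n (Suc j)"
  by (simp add: flat_def)

lemma flat_gap: "flat m + m div k < flat (Suc m)"
proof (cases "Suc (m mod k) = k")
  case True
  then have "Suc m mod k = 0" "Suc m div k = Suc (m div k)" by (simp_all add: mod_Suc div_Suc)
  then show ?thesis using True gap_between[of "m div k"] by (simp add: flat_def)
next
  case False
  then have "Suc m mod k = Suc (m mod k)" "Suc m div k = m div k" by (simp_all add: mod_Suc div_Suc)
  moreover have "Suc (m mod k) < k"
    using False k_ge_1 by (metis Suc_lessI mod_less_divisor not_one_le_zero zero_less_iff_neq_zero)
  ultimately show ?thesis using gap_within[of "Suc (m mod k)" "m div k"] by (simp add: flat_def)
qed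

lemma strict_mono_flat: "strict_mono flat"
  using flat_gap by (metis add_lessD1 strict_mono_Suc_iff)

lemma filterlim_flat_gap: "filterlim (\<lambda>m. flat (Suc m) - flat m) at_top sequentially"
  unfolding filterlim_at_top
proof
  fix Z
  have "Z \<le> flat (Suc m) - flat m" if "Z * k \<le> m" for m
  proof -
    have "Z \<le> m div k" using that k_ge_1 by (simp add: less_eq_div_iff_mult_less_eq)
    then show ?thesis using flat_gap[of m] by linarith
  qed
  then show "eventually (\<lambda>m. Z \<le> flat (Suc m) - flat m) sequentially"
    unfolding eventually_sequentially by blast
qed

lemma summable_row: "j < k \<Longrightarrow> summable (\<lambda>n. (1/2::real) ^ e n (Suc j))"
proof (rule summable_comparison_test'[where g = "\<lambda>n. (1/2) ^ n" and N = 0])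
  show "summable (\<lambda>n. (1/2::real) ^ n)" by (simp add: summable_geometric)
next
  fix n assume "j < k"
  have "n \<le> n * k + j" using k_ge_1 by (metis mult_le_mono2 mult.right_neutral trans_le_add1)
  also have "\<dots> \<le> e n (Suc j)" using seq_suble[OF strict_mono_flat] flat_block[OF \<open>j < k\<close>] by metis
  finally show "norm ((1/2::real) ^ e n (Suc j)) \<le> (1/2) ^ n" by (simp add: power_decreasing)
qed

lemma suminf_flat:
  fixes c :: "nat \<Rightarrow> real"
  shows "(\<Sum>m. c (Suc (m mod k)) * (1/2) ^ flat m) = (\<Sum>j=1..k. c j * (\<Sum>n. (1/2) ^ e n j))"
proof -
  have "summable (\<lambda>m. c (Suc (m mod k)) * (1/2) ^ flat m)"
    by (rule summable_binary_series[OF strict_mono_flat, of _ "\<Sum>j=1..k. \<bar>c j\<bar>"])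
       (use k_ge_1 in \<open>auto simp: Suc_le_eq intro: member_le_sum\<close>)
  then have "(\<Sum>m. c (Suc (m mod k)) * (1/2) ^ flat m) = (\<Sum>j<k. \<Sum>n. c (Suc j) * (1/2) ^ e n (Suc j))"
    using suminf_div_mod_eq_sum_suminf[where x = "\<lambda>n j. c (Suc j) * (1/2) ^ e n (Suc j)"]
      summable_mult[OF summable_row] k_ge_1
    unfolding flat_def by simp
  also have "\<dots> = (\<Sum>j=1..k. c j * (\<Sum>n. (1/2) ^ e n j))"
    using sum_bounds_lt_plus1[of "\<lambda>j. c j * (\<Sum>n. (1/2) ^ e n j)" k]
    by (simp add: suminf_mult summable_row)
  finally show ?thesis .
qed

theorem Ints_independent:
  fixes c :: "nat \<Rightarrow> real"
  assumes c_Ints: "\<forall>j\<in>{0..k}. c j \<in> \<int>"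
    and relation: "c 0 + (\<Sum>j=1..k. c j * (\<Sum>n. (1/2) ^ e n j)) = 0"
  shows "\<forall>j\<in>{0..k}. c j = 0"
proof -
  define d where "d m = c (Suc (m mod k))" for m
  have d_bound: "\<bar>d m\<bar> \<le> (\<Sum>j=1..k. \<bar>c j\<bar>)" for m
    unfolding d_def using k_ge_1 by (auto simp: Suc_le_eq intro: member_le_sum)
  have d_Ints: "d m \<in> \<int>" for m
    unfolding d_def using c_Ints k_ge_1 by (simp add: Suc_le_eq)
  have "(\<Sum>m. d m * (1/2) ^ flat m) = - c 0"
    using relation unfolding d_def suminf_flat by linarith
  then have "(\<Sum>m. d m * (1/2) ^ flat m) \<in> \<int>"
    using c_Ints by simp
  then obtain M where M: "\<And>m. m \<ge> M \<Longrightarrow> d m = 0"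
    using lacunary_binary_series_Ints_imp_eventually_zero[OF strict_mono_flat filterlim_flat_gap,
        of d, OF d_bound d_Ints]
    unfolding eventually_sequentially by blast
  have c_eq_0: "c j = 0" if j: "1 \<le> j" "j \<le> k" for j
  proof -
    obtain i where i: "j = Suc i" "i < k" using j by (cases j) auto
    have "c j = d (M * k + i)" using i by (simp add: d_def)
    also have "\<dots> = 0" using M k_ge_1 by (simp add: trans_le_add1)
    finally show ?thesis .
  qed
  then have "c 0 = 0" using relation by simp
  with c_eq_0 show ?thesis by (metis atLeastAtMost_iff less_one not_less)
qed

theorem Rats_independent:
  fixes q :: "nat \<Rightarrow> real"
  assumes q_Rats: "\<forall>j\<in>{0..k}. q j \<in> \<rat>"
    and relation: "q 0 + (\<Sum>j=1..k. q j * (\<Sum>n. (1/2) ^ e n j)) = 0"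
  shows "\<forall>j\<in>{0..k}. q j = 0"
proof -
  obtain D :: nat where D: "D > 0" "\<forall>j\<in>{0..k}. real D * q j \<in> \<int>"
    using Rats_common_denominator[of "{0..k}" q] q_Rats by auto
  have "real D * q 0 + (\<Sum>j=1..k. real D * q j * (\<Sum>n. (1/2) ^ e n j)) = 0"
    using arg_cong[OF relation, of "\<lambda>x. real D * x"]
    by (simp add: distrib_left sum_distrib_left mult.assoc)
  then have "\<forall>j\<in>{0..k}. real D * q j = 0"
    using Ints_independent[of "\<lambda>j. real D * q j"] D(2) by blast
  then show ?thesis using D(1) by simp
qed

end

lemma tendsto_floor_mult_divide:
  fixes X :: "nat \<Rightarrow> real"
  assumes X: "filterlim X at_top sequentially"
  shows "(\<lambda>n. of_int \<lfloor>s * X n\<rfloor> / X n) \<longlonglongrightarrow> s"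
proof (rule tendsto_sandwich[of "\<lambda>n. s - inverse (X n)" _ _ "\<lambda>n. s"])
  have X_pos: "eventually (\<lambda>n. 0 < X n) sequentially"
    using X by (simp add: filterlim_at_top_dense)
  then show "eventually (\<lambda>n. s - inverse (X n) \<le> of_int \<lfloor>s * X n\<rfloor> / X n) sequentially"
  proof eventually_elim
    case (elim n)
    have "s * X n - 1 \<le> of_int \<lfloor>s * X n\<rfloor>" by linarith
    then have "(s * X n - 1) / X n \<le> of_int \<lfloor>s * X n\<rfloor> / X n"
      using elim by (intro divide_right_mono) auto
    moreover have "(s * X n - 1) / X n = s - inverse (X n)" using elim by (simp add: field_simps)
    ultimately show ?case by simp
  qed
  from X_pos show "eventually (\<lambda>n. of_int \<lfloor>s * X n\<rfloor> / X n \<le> s) sequentially"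
    by eventually_elim (simp add: field_simps)
  show "(\<lambda>n. s - inverse (X n)) \<longlonglongrightarrow> s"
    using tendsto_diff[OF tendsto_const tendsto_inverse_0_at_top[OF X], of s] by simp
qed simp

locale increasing_weights =
  fixes k :: nat and \<eta> :: "nat \<Rightarrow> real"
  assumes k_ge_1: "k \<ge> 1"
    and weights_sum: "(\<Sum>j=1..k. \<eta> j) = 1"
    and first_weight_pos: "\<eta> 1 > 0"
    and weights_mono: "\<And>j. 2 \<le> j \<Longrightarrow> j \<le> k \<Longrightarrow> \<eta> (j - 1) \<le> \<eta> j"
begin

lemma first_weight_le: "1 \<le> j \<Longrightarrow> j \<le> k \<Longrightarrow> \<eta> 1 \<le> \<eta> j"
proof (induction j rule: dec_induct)
  case (step j)
  then show ?case using weights_mono[of "Suc j"] by simp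
qed simp

definition partial_weight :: "nat \<Rightarrow> real"
  where "partial_weight j = (\<Sum>i=1..j. \<eta> i)"

lemma partial_weight_Suc: "partial_weight (Suc j) = partial_weight j + \<eta> (Suc j)"
  by (simp add: partial_weight_def)

lemma partial_weight_1: "partial_weight 1 = \<eta> 1"
  by (simp add: partial_weight_def)

lemma partial_weight_k: "partial_weight k = 1"
  using weights_sum by (simp add: partial_weight_def)

lemma weight_pos: "1 \<le> j \<Longrightarrow> j \<le> k \<Longrightarrow> 0 < \<eta> j"
  using first_weight_le first_weight_pos by fastforce

lemma first_weight_le_partial_weight:
  assumes "1 \<le> j" "j \<le> k"
  shows "\<eta> 1 \<le> partial_weight j"
  unfolding partial_weight_def
proof (rule member_le_sum)
  fix i assume "i \<in> {1..j} - {1}"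
  then show "0 \<le> \<eta> i" using weight_pos[of i] assms by force
qed (use assms in simp_all)

lemma partial_weight_nonneg: "j \<le> k \<Longrightarrow> 0 \<le> partial_weight j"
  unfolding partial_weight_def using weight_pos by (intro sum_nonneg) fastforce

lemma first_weight_le_1: "\<eta> 1 \<le> 1"
  using first_weight_le_partial_weight[of k] k_ge_1 partial_weight_k by simp

definition scale_base :: nat
  where "scale_base = nat \<lceil>2 / \<eta> 1\<rceil>"

lemma first_weight_times_scale_base: "2 \<le> \<eta> 1 * real scale_base"
proof -
  have "2 / \<eta> 1 \<le> real scale_base" unfolding scale_base_def by linarith
  then show ?thesis using first_weight_pos by (simp add: field_simps)
qed

lemma scale_base_pos: "0 < scale_base"
  using first_weight_times_scale_base by (cases scale_base) auto

text \<open>The factorial makes consecutive scales grow by an unbounded factor; the powers of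
  scale_base, with eta_1 scale_base \<ge> 2, make all gaps positive already from the first block on.\<close>

definition block_scale :: "nat \<Rightarrow> nat"
  where "block_scale n = scale_base ^ Suc n * fact (Suc n)"

lemma block_scale_Suc: "real (block_scale (Suc n)) = real scale_base * (real n + 2) * real (block_scale n)"
proof -
  have "fact (Suc (Suc n)) = (real n + 2) * (fact (Suc n) :: real)"
    by (simp only: fact_Suc[of "Suc n"]) simp
  then show ?thesis unfolding block_scale_def by (simp del: fact_Suc)
qed

lemma first_weight_times_block_scale: "2 * (real n + 1) \<le> \<eta> 1 * real (block_scale n)"
proof -
  have "real (Suc n) \<le> fact (Suc n)"
    by (metis fact_ge_self of_nat_fact of_nat_le_iff)
  moreover have "1 \<le> real scale_base ^ n" using scale_base_pos by simp
  ultimately have "2 * (1 * (real n + 1)) \<le> (\<eta> 1 * real scale_base) * (real scale_base ^ n * fact (Suc n))"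
    using first_weight_times_scale_base by (intro mult_mono) (auto simp del: fact_Suc)
  also have "\<dots> = \<eta> 1 * real (block_scale n)"
    unfolding block_scale_def by (simp del: fact_Suc add: mult_ac)
  finally show ?thesis by simp
qed

lemma block_scale_pos: "0 < block_scale n"
  unfolding block_scale_def using scale_base_pos by simp

lemma block_scale_ge_1: "1 \<le> real (block_scale n)"
  using block_scale_pos[of n] by linarith

definition block_exponent :: "nat \<Rightarrow> nat \<Rightarrow> nat"
  where "block_exponent n j = nat \<lfloor>partial_weight j * real (block_scale n)\<rfloor>"

lemma of_nat_block_exponent:
  "j \<le> k \<Longrightarrow> real (block_exponent n j) = of_int \<lfloor>partial_weight j * real (block_scale n)\<rfloor>"
  unfolding block_exponent_def using partial_weight_nonneg by simp

lemma block_exponent_bounds: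
  assumes "j \<le> k"
  shows "partial_weight j * real (block_scale n) - 1 < real (block_exponent n j)"
    and "real (block_exponent n j) \<le> partial_weight j * real (block_scale n)"
  using of_nat_block_exponent[OF assms, of n] by linarith+

lemma block_exponent_last: "block_exponent n k = block_scale n"
  unfolding block_exponent_def partial_weight_k by simp

lemma block_exponent_pos: "1 \<le> j \<Longrightarrow> j \<le> k \<Longrightarrow> 0 < block_exponent n j"
  using block_exponent_bounds(1)[of j n] first_weight_le_partial_weight[of j] first_weight_times_block_scale[of n]
    mult_right_mono[of "\<eta> 1" "partial_weight j" "real (block_scale n)"]
  by fastforce

lemma block_exponent_gap_within:
  assumes "1 \<le> j" "j < k"
  shows "block_exponent n j + n < block_exponent n (Suc j)"
proof -
  have "\<eta> 1 * real (block_scale n) \<le> \<eta> (Suc j) * real (block_scale n)"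
    using first_weight_le[of "Suc j"] assms by (intro mult_right_mono) auto
  then have "real (block_exponent n j) + real n < real (block_exponent n (Suc j))"
    using block_exponent_bounds[of "Suc j" n] block_exponent_bounds[of j n] assms
      first_weight_times_block_scale[of n] partial_weight_Suc[of j]
    by (simp add: algebra_simps)
  then show ?thesis by linarith
qed

lemma block_exponent_next_first_lower:
  "2 * (real n + 2) * real (block_scale n) - 1 < real (block_exponent (Suc n) 1)"
proof -
  have "2 * ((real n + 2) * real (block_scale n)) \<le> (\<eta> 1 * real scale_base) * ((real n + 2) * real (block_scale n))"
    using first_weight_times_scale_base by (intro mult_right_mono) auto
  then show ?thesis
    using block_exponent_bounds(1)[of 1 "Suc n"] k_ge_1 partial_weight_1 block_scale_Suc[of n]
    by (simp add: algebra_simps)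
qed

lemma block_exponent_gap_between: "block_exponent n k + n < block_exponent (Suc n) 1"
proof -
  have "(2 * real n + 3) * 1 \<le> (2 * real n + 3) * real (block_scale n)"
    using block_scale_ge_1 by (intro mult_left_mono) auto
  then have "real (block_exponent n k) + real n < real (block_exponent (Suc n) 1)"
    using block_exponent_next_first_lower[of n] block_exponent_last[of n] by (simp add: algebra_simps)
  then show ?thesis by linarith
qed

lemma filterlim_block_scale: "filterlim (\<lambda>n. real (block_scale n)) at_top sequentially"
proof (rule filterlim_at_top_mono[OF filterlim_real_sequentially always_eventually], rule allI)
  fix n
  have "real n \<le> 2 * (real n + 1)" by simp
  also have "\<dots> \<le> \<eta> 1 * real (block_scale n)" by (rule first_weight_times_block_scale)
  also have "\<dots> \<le> real (block_scale n)"
    using first_weight_le_1 less_imp_le[OF first_weight_pos] by (intro mult_left_le_one_le) auto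
  finally show "real n \<le> real (block_scale n)" .
qed

lemma tendsto_block_scale_ratio: "(\<lambda>n. real (block_scale n) / real (block_scale (Suc n))) \<longlonglongrightarrow> 0"
proof -
  have "real n * 1 \<le> real n * real scale_base" for n
    using scale_base_pos by (intro mult_left_mono) auto
  then have "real n \<le> real scale_base * (real n + 2)" for n
    by (simp add: algebra_simps add_increasing2)
  then have lim: "filterlim (\<lambda>n. real scale_base * (real n + 2)) at_top sequentially"
    by (intro filterlim_at_top_mono[OF filterlim_real_sequentially always_eventually] allI)
  have ratio: "real (block_scale n) / real (block_scale (Suc n)) = inverse (real scale_base * (real n + 2))" for n
    using block_scale_pos[of n] by (simp add: block_scale_Suc inverse_eq_divide)
  show ?thesis unfolding ratio by (rule tendsto_inverse_0_at_top[OF lim])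
qed

lemma tendsto_block_exponent_first_gap:
  "(\<lambda>n. (real (block_exponent (n + 1) 1) - real (block_exponent n k)) / real (block_exponent (n + 1) k)) \<longlonglongrightarrow> \<eta> 1"
proof -
  have "(\<lambda>n. of_int \<lfloor>partial_weight 1 * real (block_scale (Suc n))\<rfloor> / real (block_scale (Suc n))
                 - real (block_scale n) / real (block_scale (Suc n))) \<longlonglongrightarrow> partial_weight 1 - 0"
    using filterlim_compose[OF filterlim_block_scale filterlim_Suc]
    by (intro tendsto_diff tendsto_floor_mult_divide tendsto_block_scale_ratio) (simp add: o_def)
  then show ?thesis
    using k_ge_1 by (simp add: of_nat_block_exponent block_exponent_last diff_divide_distrib partial_weight_def)
qed

lemma tendsto_block_exponent_gap:
  assumes "i \<in> {2..k}"
  shows "(\<lambda>n. (real (block_exponent n i) - real (block_exponent n (i - 1))) / real (block_exponent n k)) \<longlonglongrightarrow> \<eta> i"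
proof -
  have "(\<lambda>n. of_int \<lfloor>partial_weight i * real (block_scale n)\<rfloor> / real (block_scale n)
                 - of_int \<lfloor>partial_weight (i - 1) * real (block_scale n)\<rfloor> / real (block_scale n))
          \<longlonglongrightarrow> partial_weight i - partial_weight (i - 1)"
    by (intro tendsto_diff tendsto_floor_mult_divide filterlim_block_scale)
  moreover have "partial_weight i - partial_weight (i - 1) = \<eta> i"
    using partial_weight_Suc[of "i - 1"] assms by simp
  moreover have "i - 1 \<le> k" "i \<le> k" using assms by auto
  ultimately show ?thesis
    by (simp add: of_nat_block_exponent block_exponent_last diff_divide_distrib)
qed

lemma filterlim_block_exponent_ratio:
  "filterlim (\<lambda>n. real (block_exponent (n + 1) 1) / real (block_exponent n k)) at_top sequentially"
proof (rule filterlim_at_top_mono[OF filterlim_real_sequentially always_eventually], rule allI)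
  fix n
  have "1 * 1 \<le> (real n + 4) * real (block_scale n)"
    using block_scale_ge_1[of n] by (intro mult_mono) auto
  then have "real n * real (block_scale n) \<le> 2 * (real n + 2) * real (block_scale n) - 1"
    by (simp add: algebra_simps)
  then have "real n * real (block_scale n) \<le> real (block_exponent (Suc n) 1)"
    using block_exponent_next_first_lower[of n] by linarith
  then show "real n \<le> real (block_exponent (n + 1) 1) / real (block_exponent n k)"
    using block_scale_pos[of n] by (simp add: block_exponent_last field_simps)
qed

end

theorem proposition2p7:
  fixes k :: nat and \<eta> :: "nat \<Rightarrow> real"
  assumes "k \<ge> 1"
    and "(\<Sum>j=1..k. \<eta> j) = 1"
    and "\<eta> 1 > 0"
    and "\<And>j. 2 \<le> j \<Longrightarrow> j \<le> k \<Longrightarrow> \<eta> (j - 1) \<le> \<eta> j"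
  shows "\<exists>a :: nat \<Rightarrow> nat \<Rightarrow> nat.
     (\<forall>n\<ge>1. \<forall>j\<in>{1..k}. a n j > 0)
   \<and> (\<forall>n\<ge>1. \<forall>j. 1 \<le> j \<and> j < k \<longrightarrow> a n j < a n (j + 1))
   \<and> (\<forall>n\<ge>1. a n k < a (n + 1) 1)
   \<and> (\<lambda>n. (real (a (n + 1) 1) - real (a n k)) / real (a (n + 1) k)) \<longlonglongrightarrow> \<eta> 1
   \<and> (\<forall>i\<in>{2..k}. (\<lambda>n. (real (a n i) - real (a n (i - 1))) / real (a n k)) \<longlonglongrightarrow> \<eta> i)
   \<and> filterlim (\<lambda>n. real (a (n + 1) 1) / real (a n k)) at_top sequentially
   \<and> (\<forall>q :: nat \<Rightarrow> real. (\<forall>j\<in>{0..k}. q j \<in> \<rat>) \<and>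
        q 0 + (\<Sum>j=1..k. q j * (\<Sum>n. (1/2::real) ^ a (n + 1) j)) = 0
        \<longrightarrow> (\<forall>j\<in>{0..k}. q j = 0))"
proof -
  interpret increasing_weights k \<eta> using assms by unfold_locales
  interpret blocks: lacunary_blocks k "\<lambda>n. block_exponent (n + 1)"
  proof
    fix n j :: nat assume "1 \<le> j" "j < k"
    then show "block_exponent (n + 1) j + n < block_exponent (n + 1) (Suc j)"
      using block_exponent_gap_within[of j "n + 1"] by simp
  next
    fix n
    show "block_exponent (n + 1) k + n < block_exponent (Suc n + 1) 1"
      using block_exponent_gap_between[of "n + 1"] by simp
  qed (rule k_ge_1)
  have "block_exponent n j < block_exponent n (j + 1)" if "1 \<le> j" "j < k" for n j
    using block_exponent_gap_within[OF that, of n] by simp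
  moreover have "block_exponent n k < block_exponent (n + 1) 1" for n
    using block_exponent_gap_between[of n] by simp
  ultimately show ?thesis
    using block_exponent_pos tendsto_block_exponent_first_gap tendsto_block_exponent_gap
      filterlim_block_exponent_ratio blocks.Rats_independent
    by (intro exI[of _ block_exponent]) auto
qed

end
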